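(* Let $M=\{x_i,y_i,u_i^j,v_i^j: i\in\{1,2,3\},\ j\in\mathbb N\}$ (all these points distinct) be the metric space in which $d(y_1,x_2)=d(y_2,x_3)=d(y_3,x_1)=1$, $d(x_i,u_i^j)=d(u_i^j,v_i^j)=d(v_i^j,y_i)=1$ for all $i\in\{1,2,3\}$ and $j\in\mathbb N$, and the distance between any two other distinct points is $2$; choose any base point in $M$. Then $\mathrm{Lip}_0(M)$ has the LD2P but does not have the $w^*$-D2P (and hence does not have the D2P).
   Context: $\mathrm{Lip}_0(M)$ is the real Banach space of Lipschitz $f\colon M\to\mathbb R$ vanishing at the base point, normed by the best Lipschitz constant; it is the dual of the Lipschitz-free space $\mathcal F(M)$ (norm-closed span of point evaluations in $\mathrm{Lip}_0(M)^*$), which defines its weak-star topology. A Banach space $X$ has the LD2P if every slice $\{x\in B_X:x^*(x)>1-\alpha\}$ ($\|x^*\|=1$, $\alpha>0$) of the unit ball $B_X$ has diameter $2$; it has the D2P if every nonempty relatively weakly open subset of $B_X$ has diameter $2$; a dual space has the $w^*$-D2P if every nonempty relatively weak-star open subset of $B_X$ has diameter $2$. *)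

theory Defs
  imports "HOL-Analysis.Analysis"
begin

datatype idx = I1 | I2 | I3

fun nxt :: "idx \<Rightarrow> idx" where
  "nxt I1 = I2" | "nxt I2 = I3" | "nxt I3 = I1"

datatype pt = X idx | Y idx | U idx nat | V idx nat

definition edge :: "pt \<Rightarrow> pt \<Rightarrow> bool" where
  "edge p q \<longleftrightarrow>
     (\<exists>i. {p, q} = {Y i, X (nxt i)}) \<or>
     (\<exists>i j. {p, q} = {X i, U i j}) \<or>
     (\<exists>i j. {p, q} = {U i j, V i j}) \<or>
     (\<exists>i j. {p, q} = {V i j, Y i})"

definition d :: "pt \<Rightarrow> pt \<Rightarrow> real" where
  "d p q = (if p = q then 0 else if edge p q then 1 else 2)"

definition lipnorm :: "(pt \<Rightarrow> real) \<Rightarrow> real" where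
  "lipnorm f = Sup {\<bar>f p - f q\<bar> / d p q | p q. p \<noteq> q}"

definition Lip0 :: "pt \<Rightarrow> (pt \<Rightarrow> real) set" where
  "Lip0 p0 = {f. f p0 = 0 \<and> bdd_above {\<bar>f p - f q\<bar> / d p q | p q. p \<noteq> q}}"

definition Ball0 :: "pt \<Rightarrow> (pt \<Rightarrow> real) set" where
  "Ball0 p0 = {f \<in> Lip0 p0. lipnorm f \<le> 1}"

definition diam0 :: "(pt \<Rightarrow> real) set \<Rightarrow> real" where
  "diam0 S = Sup {lipnorm (\<lambda>x. f x - g x) | f g. f \<in> S \<and> g \<in> S}"

definition is_dual :: "pt \<Rightarrow> ((pt \<Rightarrow> real) \<Rightarrow> real) \<Rightarrow> bool" where
  "is_dual p0 \<phi> \<longleftrightarrow>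
     (\<forall>f\<in>Lip0 p0. \<forall>g\<in>Lip0 p0. \<phi> (\<lambda>x. f x + g x) = \<phi> f + \<phi> g) \<and>
     (\<forall>f\<in>Lip0 p0. \<forall>c::real. \<phi> (\<lambda>x. c * f x) = c * \<phi> f) \<and>
     (\<exists>C. \<forall>f\<in>Lip0 p0. \<bar>\<phi> f\<bar> \<le> C * lipnorm f)"

definition dualnorm :: "pt \<Rightarrow> ((pt \<Rightarrow> real) \<Rightarrow> real) \<Rightarrow> real" where
  "dualnorm p0 \<phi> = Sup {\<bar>\<phi> f\<bar> | f. f \<in> Ball0 p0}"

text \<open>The Lipschitz-free space: norm-closed span of the point evaluations in Lip_0(M)^*.\<close>
definition span_evals :: "((pt \<Rightarrow> real) \<Rightarrow> real) set" where
  "span_evals = {(\<lambda>f. \<Sum>p\<in>P. c p * f p) | P c. finite P}"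

definition Free :: "pt \<Rightarrow> ((pt \<Rightarrow> real) \<Rightarrow> real) set" where
  "Free p0 = {\<phi>. is_dual p0 \<phi> \<and>
     (\<forall>\<epsilon>>0. \<exists>\<psi>\<in>span_evals. dualnorm p0 (\<lambda>f. \<phi> f - \<psi> f) < \<epsilon>)}"

definition LD2P :: "pt \<Rightarrow> bool" where
  "LD2P p0 \<longleftrightarrow> (\<forall>\<phi> \<alpha>. is_dual p0 \<phi> \<and> dualnorm p0 \<phi> = 1 \<and> \<alpha> > 0 \<longrightarrow>
      diam0 {f \<in> Ball0 p0. \<phi> f > 1 - \<alpha>} = 2)"

text \<open>W is relatively open in the unit ball for the weak topology induced by the
  family of functionals Psi (via the standard neighbourhood basis).\<close>
definition rel_open_in_ball :: "pt \<Rightarrow> ((pt \<Rightarrow> real) \<Rightarrow> real) set \<Rightarrow> (pt \<Rightarrow> real) set \<Rightarrow> bool" where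
  "rel_open_in_ball p0 \<Psi> W \<longleftrightarrow> W \<subseteq> Ball0 p0 \<and>
     (\<forall>f\<in>W. \<exists>\<Phi> \<epsilon>. finite \<Phi> \<and> \<Phi> \<subseteq> \<Psi> \<and> \<epsilon> > 0 \<and>
        {g \<in> Ball0 p0. \<forall>\<phi>\<in>\<Phi>. \<bar>\<phi> g - \<phi> f\<bar> < \<epsilon>} \<subseteq> W)"

definition D2P :: "pt \<Rightarrow> bool" where
  "D2P p0 \<longleftrightarrow> (\<forall>W. rel_open_in_ball p0 {\<phi>. is_dual p0 \<phi>} W \<and> W \<noteq> {} \<longrightarrow> diam0 W = 2)"

definition wstar_D2P :: "pt \<Rightarrow> bool" where
  "wstar_D2P p0 \<longleftrightarrow> (\<forall>W. rel_open_in_ball p0 (Free p0) W \<and> W \<noteq> {} \<longrightarrow> diam0 W = 2)"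

end

theory Submission
  imports Defs
begin

text \<open>
  LD2P: rounding (Hermite's identity \<open>\<Sum>k<n. \<lfloor>(m + k) / n\<rfloor> = m\<close>) writes \<open>\<lfloor>n f\<rfloor> / n\<close>, which
  is uniformly \<open>1/n\<close>-close to \<open>f\<close>, as an average of \<open>n\<close> integer-valued functions of the
  unit ball, so every slice contains an integer-valued \<open>g\<close>. Such a \<open>g\<close> satisfies
  \<open>\<bar>g(x\<^sub>i) - g(y\<^sub>i)\<bar> \<le> 1\<close> for some \<open>i\<close>, and then \<open>g\<close> can be redefined on \<open>u\<^sub>i\<^sup>j, v\<^sub>i\<^sup>j\<close> as
  \<open>a + 1/2, a - 1/2\<close> or as \<open>a - 1/2, a + 1/2\<close>. These two functions are at distance 2, and
  both lie in the slice for large \<open>j\<close>, because a bounded functional tends to 0 along a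
  bounded sequence of disjointly supported functions.

  No \<open>w\<^sup>*\<close>-D2P: take the weak-star open set of functions of the ball whose values at the
  six points \<open>x\<^sub>i, y\<^sub>i\<close> are \<open>\<epsilon>\<close>-close to those of a function changing by \<open>3/2\<close> along every
  arm \<open>x\<^sub>i u\<^sub>i\<^sup>j v\<^sub>i\<^sup>j y\<^sub>i\<close>. Each of the three unit steps of an arm is then confined to an
  interval of length about \<open>3 - 3/2\<close>, so differences of such functions have Lipschitz
  constant at most \<open>3/2 + 8\<epsilon> < 2\<close>.
\<close>

lemma UNIV_idx: "(UNIV :: idx set) = {I1, I2, I3}"
  using idx.exhaust by auto

lemma edge_sym: "edge p q = edge q p"
  unfolding edge_def by (auto simp: insert_commute)

lemma d_refl [simp]: "d p p = 0"
  by (simp add: d_def)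

lemma d_sym: "d p q = d q p"
  by (simp add: d_def edge_sym eq_commute)

lemma d_nonneg: "0 \<le> d p q"
  by (simp add: d_def)

lemma d_ge_1: "p \<noteq> q \<Longrightarrow> 1 \<le> d p q"
  by (simp add: d_def)

lemma d_le_2: "d p q \<le> 2"
  by (simp add: d_def)

lemma d_nonedge: "p \<noteq> q \<Longrightarrow> \<not> edge p q \<Longrightarrow> d p q = 2"
  by (simp add: d_def)

lemma d_edge: "edge p q \<Longrightarrow> d p q = 1"
  by (auto simp: d_def edge_def doubleton_eq_iff)

lemma d_X_Y: "d (X i) (Y k) = (if i = nxt k then 1 else 2)"
  by (auto simp: d_def edge_def doubleton_eq_iff)

lemma d_U: "d (U i j) q = (if q = U i j then 0 else if q = X i \<or> q = V i j then 1 else 2)"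
  by (auto simp: d_def edge_def doubleton_eq_iff)

lemma d_V: "d (V i j) q = (if q = V i j then 0 else if q = Y i \<or> q = U i j then 1 else 2)"
  by (auto simp: d_def edge_def doubleton_eq_iff)

definition nodes :: "pt set" where
  "nodes = range X \<union> range Y"

lemma finite_nodes: "finite nodes"
  by (simp add: nodes_def UNIV_idx)

definition arm_step :: "idx \<Rightarrow> pt \<Rightarrow> pt \<Rightarrow> bool" where
  "arm_step i p q \<longleftrightarrow>
     (\<exists>j. (p, q) = (X i, U i j) \<or> (p, q) = (U i j, V i j) \<or> (p, q) = (V i j, Y i))"

lemma edge_nodes_or_arm_step:
  "edge p q \<Longrightarrow> (p \<in> nodes \<and> q \<in> nodes) \<or> (\<exists>i. arm_step i p q \<or> arm_step i q p)"
  unfolding edge_def arm_step_def nodes_def by (auto simp: doubleton_eq_iff)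

lemma eventually_not_on_arm: "\<forall>\<^sub>F j in sequentially. p \<notin> {U i j, V i j}"
proof -
  have "{j. p \<in> {U i j, V i j}} \<subseteq> {j. p = U i j \<or> p = V i j}"
    by auto
  moreover have "finite {j. p = U i j \<or> p = V i j}"
    by (cases p) auto
  ultimately show ?thesis
    unfolding cofinite_eq_sequentially[symmetric] eventually_cofinite
    by (auto intro: finite_subset)
qed

section \<open>Lipschitz functions and functionals\<close>

lemma Lip0_iff: "f \<in> Lip0 p0 \<longleftrightarrow> f p0 = 0 \<and> (\<exists>B. \<forall>p. \<bar>f p\<bar> \<le> B)"
proof
  assume f: "f \<in> Lip0 p0"
  then have f0: "f p0 = 0"
    by (simp add: Lip0_def)
  obtain S where S: "\<And>p q. p \<noteq> q \<Longrightarrow> \<bar>f p - f q\<bar> / d p q \<le> S"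
    using f by (auto simp: Lip0_def bdd_above_def)
  have "\<bar>f p\<bar> \<le> \<bar>S\<bar> * 2" for p
  proof (cases "p = p0")
    case False
    have "\<bar>f p - f p0\<bar> \<le> S * d p p0"
      using S[OF False] d_ge_1[OF False] by (simp add: divide_le_eq)
    also have "\<dots> \<le> \<bar>S\<bar> * 2"
      using d_le_2 d_nonneg by (intro mult_mono) auto
    finally show ?thesis
      using f0 by simp
  qed (simp add: f0)
  then show "f p0 = 0 \<and> (\<exists>B. \<forall>p. \<bar>f p\<bar> \<le> B)"
    using f0 by blast
next
  assume "f p0 = 0 \<and> (\<exists>B. \<forall>p. \<bar>f p\<bar> \<le> B)"
  then obtain B where f0: "f p0 = 0" and B: "\<And>p. \<bar>f p\<bar> \<le> B"
    by blast
  have "\<bar>f p - f q\<bar> / d p q \<le> 2 * B" if "p \<noteq> q" for p q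
  proof -
    have "\<bar>f p - f q\<bar> \<le> 2 * B"
      using B[of p] B[of q] by linarith
    also have "\<dots> \<le> 2 * B * d p q"
      using mult_left_mono[OF d_ge_1[OF that], of "2 * B"] B[of p] by simp
    finally show ?thesis
      using d_ge_1[OF that] by (simp add: divide_le_eq)
  qed
  then show "f \<in> Lip0 p0"
    using f0 by (auto simp: Lip0_def bdd_above_def)
qed

lemma Lip0_zero: "(\<lambda>_. 0) \<in> Lip0 p0"
  unfolding Lip0_iff by force

lemma Lip0_add:
  assumes "f \<in> Lip0 p0" "g \<in> Lip0 p0"
  shows "(\<lambda>x. f x + g x) \<in> Lip0 p0"
proof -
  obtain A B where "f p0 = 0" "g p0 = 0" "\<And>p. \<bar>f p\<bar> \<le> A" "\<And>p. \<bar>g p\<bar> \<le> B"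
    using assms by (auto simp: Lip0_iff)
  then show ?thesis
    unfolding Lip0_iff by (auto intro!: exI[of _ "A + B"] intro: order_trans[OF abs_triangle_ineq] add_mono)
qed

lemma Lip0_scale:
  assumes "f \<in> Lip0 p0"
  shows "(\<lambda>x. c * f x) \<in> Lip0 p0"
proof -
  obtain A where "f p0 = 0" "\<And>p. \<bar>f p\<bar> \<le> A"
    using assms by (auto simp: Lip0_iff)
  then show ?thesis
    unfolding Lip0_iff by (auto intro!: exI[of _ "\<bar>c\<bar> * A"] simp: abs_mult intro: mult_left_mono)
qed

lemma Lip0_diff: "f \<in> Lip0 p0 \<Longrightarrow> g \<in> Lip0 p0 \<Longrightarrow> (\<lambda>x. f x - g x) \<in> Lip0 p0"
  using Lip0_add[of f p0 "\<lambda>x. (-1) * g x"] Lip0_scale[of g p0 "-1"] by simp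

lemma Lip0_sum:
  "finite J \<Longrightarrow> (\<And>j. j \<in> J \<Longrightarrow> F j \<in> Lip0 p0) \<Longrightarrow> (\<lambda>p. \<Sum>j\<in>J. F j p) \<in> Lip0 p0"
  by (induction J rule: finite_induct) (simp_all add: Lip0_zero Lip0_add)

lemma lip_le: "f \<in> Lip0 p0 \<Longrightarrow> \<bar>f p - f q\<bar> \<le> lipnorm f * d p q"
proof (cases "p = q")
  case False
  assume "f \<in> Lip0 p0"
  then have "\<bar>f p - f q\<bar> / d p q \<le> lipnorm f"
    unfolding lipnorm_def Lip0_def using False by (auto intro!: cSup_upper)
  then show ?thesis
    using d_ge_1[OF False] by (simp add: divide_le_eq)
qed simp

lemma lipnorm_nonneg: "f \<in> Lip0 p0 \<Longrightarrow> 0 \<le> lipnorm f"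
  using lip_le[of f p0 "X I1" "Y I1"] by (simp add: d_X_Y)

lemma lipnorm_le:
  assumes "\<And>p q. p \<noteq> q \<Longrightarrow> \<bar>f p - f q\<bar> \<le> K * d p q"
  shows "lipnorm f \<le> K"
  unfolding lipnorm_def
proof (rule cSup_least)
  have "X I1 \<noteq> Y I1"
    by simp
  then show "{\<bar>f p - f q\<bar> / d p q |p q. p \<noteq> q} \<noteq> {}"
    by blast
next
  fix r assume "r \<in> {\<bar>f p - f q\<bar> / d p q |p q. p \<noteq> q}"
  then obtain p q where "r = \<bar>f p - f q\<bar> / d p q" "p \<noteq> q"
    by blast
  then show "r \<le> K"
    using assms[of p q] d_ge_1[of p q] by (simp add: divide_le_eq)
qed

lemma lipnorm_le_oscillation:
  assumes "0 \<le> K" and "\<And>p q. \<bar>f p - f q\<bar> \<le> K"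
  shows "lipnorm f \<le> K"
proof (rule lipnorm_le)
  fix p q :: pt assume "p \<noteq> q"
  have "\<bar>f p - f q\<bar> \<le> K"
    by fact
  also have "\<dots> \<le> K * d p q"
    using mult_left_mono[OF d_ge_1[OF \<open>p \<noteq> q\<close>] \<open>0 \<le> K\<close>] by simp
  finally show "\<bar>f p - f q\<bar> \<le> K * d p q" .
qed

lemma mem_Ball0_iff: "f \<in> Ball0 p0 \<longleftrightarrow> f p0 = 0 \<and> (\<forall>p q. \<bar>f p - f q\<bar> \<le> d p q)"
proof
  assume "f \<in> Ball0 p0"
  then have f: "f \<in> Lip0 p0" and "lipnorm f \<le> 1"
    by (auto simp: Ball0_def)
  have "\<bar>f p - f q\<bar> \<le> d p q" for p q
  proof -
    have "\<bar>f p - f q\<bar> \<le> lipnorm f * d p q"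
      using f by (rule lip_le)
    also have "\<dots> \<le> d p q"
      using mult_right_mono[OF \<open>lipnorm f \<le> 1\<close> d_nonneg] by simp
    finally show ?thesis .
  qed
  then show "f p0 = 0 \<and> (\<forall>p q. \<bar>f p - f q\<bar> \<le> d p q)"
    using f by (simp add: Lip0_iff)
next
  assume f: "f p0 = 0 \<and> (\<forall>p q. \<bar>f p - f q\<bar> \<le> d p q)"
  have "\<bar>f p\<bar> \<le> 2" for p
  proof -
    have "\<bar>f p - f p0\<bar> \<le> d p p0"
      using f by blast
    then show ?thesis
      using f d_le_2[of p p0] by simp
  qed
  then have "f \<in> Lip0 p0"
    using f by (auto simp: Lip0_iff)
  moreover have "lipnorm f \<le> 1"
    using f by (intro lipnorm_le) simp
  ultimately show "f \<in> Ball0 p0"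
    by (simp add: Ball0_def)
qed

lemma zero_in_Ball0: "(\<lambda>_. 0) \<in> Ball0 p0"
  by (simp add: mem_Ball0_iff d_nonneg)

lemma Ball0_subset_Lip0: "Ball0 p0 \<subseteq> Lip0 p0"
  by (auto simp: Ball0_def)

lemma dual_add: "is_dual p0 \<phi> \<Longrightarrow> f \<in> Lip0 p0 \<Longrightarrow> g \<in> Lip0 p0 \<Longrightarrow> \<phi> (\<lambda>x. f x + g x) = \<phi> f + \<phi> g"
  by (simp add: is_dual_def)

lemma dual_scale: "is_dual p0 \<phi> \<Longrightarrow> f \<in> Lip0 p0 \<Longrightarrow> \<phi> (\<lambda>x. c * f x) = c * \<phi> f"
  by (simp add: is_dual_def)

lemma dual_diff: "is_dual p0 \<phi> \<Longrightarrow> f \<in> Lip0 p0 \<Longrightarrow> g \<in> Lip0 p0 \<Longrightarrow> \<phi> (\<lambda>x. f x - g x) = \<phi> f - \<phi> g"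
  using dual_add[of p0 \<phi> f "\<lambda>x. (-1) * g x"] dual_scale[of p0 \<phi> g "-1"] Lip0_scale[of g p0 "-1"]
  by simp

lemma dual_sum:
  assumes "is_dual p0 \<phi>" "finite J" "\<And>j. j \<in> J \<Longrightarrow> F j \<in> Lip0 p0"
  shows "\<phi> (\<lambda>p. \<Sum>j\<in>J. F j p) = (\<Sum>j\<in>J. \<phi> (F j))"
  using assms(2,3)
proof (induction J rule: finite_induct)
  case empty
  show ?case
    using dual_scale[OF assms(1) Lip0_zero, of 0] by simp
next
  case (insert j J)
  then show ?case
    using dual_add[OF assms(1), of "F j" "\<lambda>p. \<Sum>j\<in>J. F j p"] Lip0_sum[of J F p0] by simp
qed

lemma dual_bounded:
  assumes "is_dual p0 \<phi>"
  shows "\<exists>C\<ge>0. \<forall>f\<in>Lip0 p0. \<bar>\<phi> f\<bar> \<le> C * lipnorm f"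
proof -
  obtain C where C: "\<forall>f\<in>Lip0 p0. \<bar>\<phi> f\<bar> \<le> C * lipnorm f"
    using assms by (auto simp: is_dual_def)
  have "C * lipnorm f \<le> max C 0 * lipnorm f" if "f \<in> Lip0 p0" for f
    using lipnorm_nonneg[OF that] by (intro mult_right_mono) auto
  then show ?thesis
    using C by (intro exI[of _ "max C 0"]) force
qed

lemma is_dual_eval: "is_dual p0 (\<lambda>f. f p)"
  unfolding is_dual_def
proof (intro conjI ballI allI exI)
  fix f assume f: "f \<in> Lip0 p0"
  then have "\<bar>f p\<bar> \<le> lipnorm f * d p p0"
    using lip_le[OF f, of p p0] by (simp add: Lip0_def)
  also have "\<dots> \<le> 2 * lipnorm f"
    using lipnorm_nonneg[OF f] d_le_2[of p p0] by (simp add: mult.commute mult_left_mono)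
  finally show "\<bar>f p\<bar> \<le> 2 * lipnorm f" .
qed auto

lemma eval_in_Free: "(\<lambda>f. f p) \<in> Free p0"
proof -
  have "(\<lambda>f. f p) \<in> span_evals"
    unfolding span_evals_def by (auto intro!: exI[of _ "{p}"] exI[of _ "\<lambda>_. 1"])
  moreover have "{\<bar>f p - f p\<bar> |f. f \<in> Ball0 p0} = {0}"
    using zero_in_Ball0 by auto
  then have "dualnorm p0 (\<lambda>f. f p - f p) = 0"
    by (simp add: dualnorm_def)
  ultimately show ?thesis
    unfolding Free_def using is_dual_eval by force
qed

lemma exists_Ball0_dual_gt:
  assumes \<phi>: "is_dual p0 \<phi>" and norm: "dualnorm p0 \<phi> = 1" and "0 < \<alpha>"
  shows "\<exists>f\<in>Ball0 p0. 1 - \<alpha> < \<phi> f"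
proof (rule ccontr)
  assume "\<not> ?thesis"
  then have small: "\<phi> f \<le> 1 - \<alpha>" if "f \<in> Ball0 p0" for f
    using that by force
  have "\<bar>\<phi> f\<bar> \<le> 1 - \<alpha>" if f: "f \<in> Ball0 p0" for f
  proof -
    have "(\<lambda>x. (-1) * f x) \<in> Ball0 p0"
      using f by (simp add: mem_Ball0_iff abs_minus_commute)
    then have "- \<phi> f \<le> 1 - \<alpha>"
      using small dual_scale[OF \<phi>, of f "-1"] f Ball0_subset_Lip0 by fastforce
    then show ?thesis
      using small[OF f] by linarith
  qed
  then have "dualnorm p0 \<phi> \<le> 1 - \<alpha>"
    unfolding dualnorm_def using zero_in_Ball0 by (intro cSup_least) auto
  then show False
    using norm \<open>0 < \<alpha>\<close> by simp
qed

lemma diam0_le: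
  assumes "S \<noteq> {}"
    and "\<And>f g p q. f \<in> S \<Longrightarrow> g \<in> S \<Longrightarrow> \<bar>(f p - g p) - (f q - g q)\<bar> \<le> K * d p q"
  shows "diam0 S \<le> K"
  unfolding diam0_def
proof (rule cSup_least)
  show "{lipnorm (\<lambda>x. f x - g x) |f g. f \<in> S \<and> g \<in> S} \<noteq> {}"
    using \<open>S \<noteq> {}\<close> by blast
qed (use assms(2) in \<open>auto intro!: lipnorm_le\<close>)

lemma diam0_eq_2:
  assumes S: "S \<subseteq> Ball0 p0" and "f \<in> S" "g \<in> S"
    and far: "2 * d p q \<le> \<bar>(f p - g p) - (f q - g q)\<bar>" and "p \<noteq> q"
  shows "diam0 S = 2"
proof -
  have le2: "lipnorm (\<lambda>x. f x - g x) \<le> 2" if "f \<in> Ball0 p0" "g \<in> Ball0 p0" for f g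
  proof (rule lipnorm_le)
    fix p q
    have "\<bar>f p - f q\<bar> \<le> d p q" "\<bar>g p - g q\<bar> \<le> d p q"
      using that by (simp_all add: mem_Ball0_iff)
    then show "\<bar>(f p - g p) - (f q - g q)\<bar> \<le> 2 * d p q"
      by arith
  qed
  have "2 * d p q \<le> lipnorm (\<lambda>x. f x - g x) * d p q"
    using far lip_le[OF Lip0_diff, of f p0 g p q] \<open>f \<in> S\<close> \<open>g \<in> S\<close> S Ball0_subset_Lip0 by force
  then have "2 \<le> lipnorm (\<lambda>x. f x - g x)"
    using d_ge_1[OF \<open>p \<noteq> q\<close>] by simp
  then have "2 \<le> diam0 S"
    unfolding diam0_def using \<open>f \<in> S\<close> \<open>g \<in> S\<close> S le2
    by (intro cSup_upper2[where x = "lipnorm (\<lambda>x. f x - g x)"]) (auto intro!: bdd_aboveI[of _ 2])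
  moreover have "diam0 S \<le> 2"
    unfolding diam0_def using \<open>f \<in> S\<close> S le2 by (intro cSup_least) auto
  ultimately show ?thesis
    by simp
qed

section \<open>A weak-star open set of diameter less than 2\<close>

fun centre :: "pt \<Rightarrow> real" where
  "centre (X I1) = 0" | "centre (U I1 j) = 1/2" | "centre (V I1 j) = 1" | "centre (Y I1) = 3/2"
| "centre (X I2) = 1/2" | "centre (U I2 j) = 1" | "centre (V I2 j) = 3/2" | "centre (Y I2) = 2"
| "centre (X I3) = 3/2" | "centre (U I3 j) = 1" | "centre (V I3 j) = 1/2" | "centre (Y I3) = 0"

lemma centre_lipschitz: "\<bar>centre p - centre q\<bar> \<le> d p q"
proof -
  have range: "0 \<le> centre p \<and> centre p \<le> 2" for p
    by (cases p rule: centre.cases) auto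
  consider "p = q" | "edge p q" | "p \<noteq> q" "\<not> edge p q"
    by blast
  then show ?thesis
  proof cases
    case 2
    then show ?thesis
      unfolding edge_def d_def by (auto simp: doubleton_eq_iff; case_tac i; simp)+
  qed (use range[of p] range[of q] d_nonedge in auto)
qed

lemma centre_arm: "\<bar>centre (Y i) - centre (X i)\<bar> = 3/2"
  by (cases i) auto

definition nbhd :: "pt \<Rightarrow> real \<Rightarrow> (pt \<Rightarrow> real) set" where
  "nbhd p0 \<epsilon> = {f \<in> Ball0 p0. \<forall>q\<in>nodes. \<bar>f q - (centre q - centre p0)\<bar> < \<epsilon>}"

lemma nbhd_node: "f \<in> nbhd p0 \<epsilon> \<Longrightarrow> q \<in> nodes \<Longrightarrow> \<bar>f q - (centre q - centre p0)\<bar> < \<epsilon>"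
  by (simp add: nbhd_def)

lemma nbhd_Ball0: "f \<in> nbhd p0 \<epsilon> \<Longrightarrow> f \<in> Ball0 p0"
  by (simp add: nbhd_def)

lemma nbhd_pos: "f \<in> nbhd p0 \<epsilon> \<Longrightarrow> 0 < \<epsilon>"
  using nbhd_node[of f p0 \<epsilon> "X I1"] by (simp add: nodes_def)

lemma nbhd_node_diff:
  assumes "f \<in> nbhd p0 \<epsilon>" "g \<in> nbhd p0 \<epsilon>" "q \<in> nodes"
  shows "\<bar>f q - g q\<bar> < 2 * \<epsilon>"
  using nbhd_node[OF assms(1,3)] nbhd_node[OF assms(2,3)] by linarith

lemma centre_in_nbhd: "0 < \<epsilon> \<Longrightarrow> (\<lambda>p. centre p - centre p0) \<in> nbhd p0 \<epsilon>"
  unfolding nbhd_def mem_Ball0_iff using centre_lipschitz by (simp add: abs_minus_commute)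

lemma rel_open_nbhd:
  assumes "(\<lambda>q f. f q) ` nodes \<subseteq> \<Psi>"
  shows "rel_open_in_ball p0 \<Psi> (nbhd p0 \<epsilon>)"
  unfolding rel_open_in_ball_def
proof (intro conjI ballI)
  show "nbhd p0 \<epsilon> \<subseteq> Ball0 p0"
    by (auto simp: nbhd_def)
next
  fix f assume f: "f \<in> nbhd p0 \<epsilon>"
  define slack where "slack q = \<epsilon> - \<bar>f q - (centre q - centre p0)\<bar>" for q
  define \<delta> where "\<delta> = Min (slack ` nodes)"
  have "0 < \<delta>"
    unfolding \<delta>_def slack_def using f finite_nodes by (auto simp: nbhd_def nodes_def)
  moreover have "\<delta> \<le> slack q" if "q \<in> nodes" for q
    unfolding \<delta>_def using finite_nodes that by simp
  then have "{g \<in> Ball0 p0. \<forall>\<phi>\<in>(\<lambda>q f. f q) ` nodes. \<bar>\<phi> g - \<phi> f\<bar> < \<delta>} \<subseteq> nbhd p0 \<epsilon>"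
    unfolding nbhd_def slack_def by force
  ultimately show "\<exists>\<Phi> \<delta>. finite \<Phi> \<and> \<Phi> \<subseteq> \<Psi> \<and> 0 < \<delta> \<and>
      {g \<in> Ball0 p0. \<forall>\<phi>\<in>\<Phi>. \<bar>\<phi> g - \<phi> f\<bar> < \<delta>} \<subseteq> nbhd p0 \<epsilon>"
    using assms finite_nodes by blast
qed

lemma arm_step_increment:
  assumes "f \<in> Ball0 p0" and "arm_step i p q"
  shows "\<bar>f q - f p\<bar> \<le> 1" "\<bar>(f (Y i) - f (X i)) - (f q - f p)\<bar> \<le> 2"
proof -
  obtain j where pq: "(p, q) = (X i, U i j) \<or> (p, q) = (U i j, V i j) \<or> (p, q) = (V i j, Y i)"
    using assms(2) by (auto simp: arm_step_def)
  have L: "\<bar>f a - f b\<bar> \<le> d a b" for a b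
    using assms(1) by (simp add: mem_Ball0_iff)
  have "\<bar>f (U i j) - f (X i)\<bar> \<le> 1" "\<bar>f (V i j) - f (U i j)\<bar> \<le> 1" "\<bar>f (Y i) - f (V i j)\<bar> \<le> 1"
       "\<bar>f (Y i) - f (U i j)\<bar> \<le> 2" "\<bar>f (V i j) - f (X i)\<bar> \<le> 2"
    using L[of "U i j" "X i"] L[of "V i j" "U i j"] L[of "Y i" "V i j"] L[of "Y i" "U i j"]
      L[of "V i j" "X i"] by (simp_all add: d_U d_V d_sym[of "Y i"])
  with pq show "\<bar>f q - f p\<bar> \<le> 1" "\<bar>(f (Y i) - f (X i)) - (f q - f p)\<bar> \<le> 2"
    by (auto simp: abs_le_iff)
qed

text \<open>Read \<open>a\<close> (\<open>b\<close>) as one of three steps of length at most 1 adding up to \<open>S\<close> (\<open>T\<close>). For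
  \<open>S \<ge> 0\<close> this confines \<open>a\<close> to \<open>[S - 2, 1]\<close>, an interval of length \<open>3 - S\<close>.\<close>

lemma three_step_spread:
  fixes a b S T :: real
  assumes "\<bar>a\<bar> \<le> 1" "\<bar>b\<bar> \<le> 1" "\<bar>S - a\<bar> \<le> 2" "\<bar>T - b\<bar> \<le> 2"
  shows "\<bar>a - b\<bar> \<le> 3 - \<bar>S\<bar> + \<bar>S - T\<bar>"
  using assms by (simp add: abs_le_iff abs_if split: if_splits)

lemma nbhd_arm_step:
  assumes f: "f \<in> nbhd p0 \<epsilon>" and g: "g \<in> nbhd p0 \<epsilon>" and "arm_step i p q"
  shows "\<bar>(f q - f p) - (g q - g p)\<bar> \<le> 3/2 + 6 * \<epsilon>"
proof -
  have XY: "X i \<in> nodes" "Y i \<in> nodes"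
    by (auto simp: nodes_def)
  let ?S = "f (Y i) - f (X i)" and ?T = "g (Y i) - g (X i)"
  have "\<bar>?S - (centre (Y i) - centre (X i))\<bar> < 2 * \<epsilon>" "\<bar>?T - (centre (Y i) - centre (X i))\<bar> < 2 * \<epsilon>"
    using nbhd_node[OF f XY(1)] nbhd_node[OF f XY(2)] nbhd_node[OF g XY(1)] nbhd_node[OF g XY(2)]
    by (simp_all add: abs_le_iff abs_less_iff)
  then have "3 - \<bar>?S\<bar> + \<bar>?S - ?T\<bar> \<le> 3/2 + 6 * \<epsilon>"
    using centre_arm[of i] by (simp add: abs_less_iff abs_if split: if_splits)
  then show ?thesis
    using three_step_spread arm_step_increment[OF nbhd_Ball0[OF f] \<open>arm_step i p q\<close>]
      arm_step_increment[OF nbhd_Ball0[OF g] \<open>arm_step i p q\<close>] by (meson order_trans)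
qed

lemma nbhd_pointwise:
  assumes f: "f \<in> nbhd p0 \<epsilon>" and g: "g \<in> nbhd p0 \<epsilon>"
  shows "\<bar>f p - g p\<bar> \<le> 3/2 + 8 * \<epsilon>"
proof (cases p)
  case (U i j)
  have "\<bar>(f (U i j) - f (X i)) - (g (U i j) - g (X i))\<bar> \<le> 3/2 + 6 * \<epsilon>"
    by (rule nbhd_arm_step[OF f g]) (auto simp: arm_step_def)
  moreover have "\<bar>f (X i) - g (X i)\<bar> < 2 * \<epsilon>"
    by (rule nbhd_node_diff[OF f g]) (simp add: nodes_def)
  ultimately show ?thesis
    unfolding U by arith
next
  case (V i j)
  have "\<bar>(f (Y i) - f (V i j)) - (g (Y i) - g (V i j))\<bar> \<le> 3/2 + 6 * \<epsilon>"
    by (rule nbhd_arm_step[OF f g]) (auto simp: arm_step_def)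
  moreover have "\<bar>f (Y i) - g (Y i)\<bar> < 2 * \<epsilon>"
    by (rule nbhd_node_diff[OF f g]) (simp add: nodes_def)
  ultimately show ?thesis
    unfolding V by arith
qed (use nbhd_node_diff[OF f g, of p] nbhd_pos[OF f] in \<open>force simp: nodes_def\<close>)+

lemma nbhd_edge:
  assumes f: "f \<in> nbhd p0 \<epsilon>" and g: "g \<in> nbhd p0 \<epsilon>" and "edge p q"
  shows "\<bar>(f p - g p) - (f q - g q)\<bar> \<le> 3/2 + 8 * \<epsilon>"
proof -
  have swap: "\<bar>(f p - g p) - (f q - g q)\<bar> = \<bar>(f q - f p) - (g q - g p)\<bar>"
       "\<bar>(f p - g p) - (f q - g q)\<bar> = \<bar>(f p - f q) - (g p - g q)\<bar>"
    by arith+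
  from edge_nodes_or_arm_step[OF \<open>edge p q\<close>] consider "p \<in> nodes" "q \<in> nodes"
    | i where "arm_step i p q" | i where "arm_step i q p"
    by blast
  then show ?thesis
  proof cases
    case 1
    then show ?thesis
      using nbhd_node_diff[OF f g, of p] nbhd_node_diff[OF f g, of q] by arith
  next
    case 2
    then show ?thesis
      using nbhd_arm_step[OF f g] nbhd_pos[OF f] swap(1) by fastforce
  next
    case 3
    then show ?thesis
      using nbhd_arm_step[OF f g] nbhd_pos[OF f] swap(2) by fastforce
  qed
qed

lemma nbhd_diff_lipschitz:
  assumes f: "f \<in> nbhd p0 \<epsilon>" and g: "g \<in> nbhd p0 \<epsilon>"
  shows "\<bar>(f p - g p) - (f q - g q)\<bar> \<le> (3/2 + 8 * \<epsilon>) * d p q"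
proof -
  consider "p = q" | "edge p q" | "p \<noteq> q" "\<not> edge p q"
    by blast
  then show ?thesis
  proof cases
    case 1
    then show ?thesis
      by simp
  next
    case 2
    then show ?thesis
      using nbhd_edge[OF f g] d_edge by simp
  next
    case 3
    then show ?thesis
      using nbhd_pointwise[OF f g, of p] nbhd_pointwise[OF f g, of q] d_nonedge by simp
  qed
qed

lemma exists_rel_open_diam0_lt_2:
  assumes "(\<lambda>q f. f q) ` nodes \<subseteq> \<Psi>"
  shows "\<exists>W. rel_open_in_ball p0 \<Psi> W \<and> W \<noteq> {} \<and> diam0 W < 2"
proof (intro exI conjI)
  show "rel_open_in_ball p0 \<Psi> (nbhd p0 (1/32))"
    using assms by (rule rel_open_nbhd)
  show "nbhd p0 (1/32) \<noteq> {}"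
    using centre_in_nbhd[of "1/32" p0] by auto
  then have "diam0 (nbhd p0 (1/32)) \<le> 3/2 + 8 * (1/32)"
    by (intro diam0_le) (use nbhd_diff_lipschitz in blast)+
  then show "diam0 (nbhd p0 (1/32)) < 2"
    by simp
qed

section \<open>Every slice has diameter 2\<close>

definition lattice_round :: "nat \<Rightarrow> nat \<Rightarrow> real \<Rightarrow> int" where
  "lattice_round n k x = (\<lfloor>real n * x\<rfloor> + int k) div int n"

lemma sum_div_shift:
  fixes m :: int
  assumes "0 < n"
  shows "(\<Sum>k<n. (m + int k) div int n) = m"
proof -
  have succ: "(\<Sum>k<n. (m + 1 + int k) div int n) = (\<Sum>k<n. (m + int k) div int n) + 1" for m
  proof -
    let ?F = "\<lambda>k. (m + int k) div int n"
    have "(\<Sum>k<n. ?F (Suc k)) + ?F 0 = (\<Sum>k<n. ?F k) + ?F n"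
      using sum.lessThan_Suc_shift[of ?F n] by (simp add: add.commute)
    moreover have "?F n = ?F 0 + 1"
      using assms by simp
    ultimately show ?thesis
      by (simp add: ac_simps)
  qed
  show ?thesis
  proof (induction m rule: int_induct[where k = 0])
    case base
    show ?case
      by (simp add: sum.neutral)
  next
    case (step1 i)
    then show ?case
      using succ[of i] by simp
  next
    case (step2 i)
    then show ?case
      using succ[of "i - 1"] by simp
  qed
qed

lemma sum_lattice_round: "0 < n \<Longrightarrow> (\<Sum>k<n. lattice_round n k x) = \<lfloor>real n * x\<rfloor>"
  unfolding lattice_round_def by (rule sum_div_shift)

lemma lattice_round_diff_le:
  assumes n: "0 < n" and xy: "\<bar>x - y\<bar> \<le> of_int D"
  shows "\<bar>lattice_round n k x - lattice_round n k y\<bar> \<le> D"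
proof -
  have shift: "lattice_round n k x \<le> lattice_round n k y + D" if "x \<le> y + of_int D" for x y
  proof -
    have "real n * x \<le> real n * y + of_int (int n * D)"
      using mult_left_mono[OF that, of "real n"] by (simp add: algebra_simps)
    then have "\<lfloor>real n * x\<rfloor> \<le> \<lfloor>real n * y + of_int (int n * D)\<rfloor>"
      by (rule floor_mono)
    then have "\<lfloor>real n * x\<rfloor> \<le> \<lfloor>real n * y\<rfloor> + int n * D"
      by (simp only: floor_add_int)
    then have "lattice_round n k x \<le> (\<lfloor>real n * y\<rfloor> + int k + int n * D) div int n"
      unfolding lattice_round_def using n by (intro zdiv_mono1) auto
    also have "\<dots> = lattice_round n k y + D"
      unfolding lattice_round_def using n by simp
    finally show ?thesis .
  qed
  show ?thesis
    using shift[of x y] shift[of y x] xy by (simp add: abs_le_iff)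
qed

lemma lattice_round_in_Ball0:
  assumes f: "f \<in> Ball0 p0" and "0 < n" "k < n"
  shows "(\<lambda>p. of_int (lattice_round n k (f p))) \<in> Ball0 p0"
  unfolding mem_Ball0_iff
proof (intro conjI allI)
  show "real_of_int (lattice_round n k (f p0)) = 0"
    using f \<open>k < n\<close> by (simp add: mem_Ball0_iff lattice_round_def)
  fix p q
  define D :: int where "D = (if p = q then 0 else if edge p q then 1 else 2)"
  have D: "d p q = of_int D"
    by (simp add: D_def d_def)
  then have "\<bar>f p - f q\<bar> \<le> of_int D"
    using f unfolding mem_Ball0_iff by metis
  then have "\<bar>lattice_round n k (f p) - lattice_round n k (f q)\<bar> \<le> D"
    by (rule lattice_round_diff_le[OF \<open>0 < n\<close>])
  then show "\<bar>of_int (lattice_round n k (f p)) - of_int (lattice_round n k (f q))\<bar> \<le> d p q"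
    unfolding D by (simp flip: of_int_diff of_int_abs)
qed

lemma dual_sum_lattice_round_ge:
  assumes \<phi>: "is_dual p0 \<phi>" and "0 \<le> C" and C: "\<forall>h\<in>Lip0 p0. \<bar>\<phi> h\<bar> \<le> C * lipnorm h"
    and f: "f \<in> Ball0 p0" and "0 < n"
  shows "real n * \<phi> f - C \<le> (\<Sum>k<n. \<phi> (\<lambda>p. of_int (lattice_round n k (f p))))"
proof -
  define r where "r k = (\<lambda>p. real_of_int (lattice_round n k (f p)))" for k
  have rL: "r k \<in> Lip0 p0" if "k < n" for k
    unfolding r_def using lattice_round_in_Ball0[OF f \<open>0 < n\<close> that] Ball0_subset_Lip0 by blast
  have sumL: "(\<lambda>p. \<Sum>k<n. r k p) \<in> Lip0 p0"
    using rL by (intro Lip0_sum) auto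
  have fL: "f \<in> Lip0 p0"
    using f Ball0_subset_Lip0 by blast
  define e where "e p = real n * f p - (\<Sum>k<n. r k p)" for p
  have eL: "e \<in> Lip0 p0"
    unfolding e_def using Lip0_diff[OF Lip0_scale[OF fL] sumL] .
  have e01: "0 \<le> e p \<and> e p \<le> 1" for p
    unfolding e_def r_def using sum_lattice_round[OF \<open>0 < n\<close>, of "f p"]
    by (simp flip: of_int_sum) linarith
  have "\<bar>e p - e q\<bar> \<le> 1" for p q
    using e01[of p] e01[of q] by arith
  then have "lipnorm e \<le> 1"
    by (intro lipnorm_le_oscillation) simp_all
  then have "\<bar>\<phi> e\<bar> \<le> C"
    using C eL mult_left_mono[OF _ \<open>0 \<le> C\<close>, of "lipnorm e" 1] by fastforce
  have "real n * \<phi> f = \<phi> (\<lambda>p. real n * f p)"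
    using dual_scale[OF \<phi> fL] by simp
  also have "(\<lambda>p. real n * f p) = (\<lambda>p. (\<Sum>k<n. r k p) + e p)"
    by (simp add: e_def)
  also have "\<phi> \<dots> = \<phi> (\<lambda>p. \<Sum>k<n. r k p) + \<phi> e"
    by (rule dual_add[OF \<phi> sumL eL])
  also have "\<phi> (\<lambda>p. \<Sum>k<n. r k p) = (\<Sum>k<n. \<phi> (r k))"
    using dual_sum[OF \<phi>, of "{..<n}" r] rL by simp
  finally show ?thesis
    using \<open>\<bar>\<phi> e\<bar> \<le> C\<close> unfolding r_def by arith
qed

lemma exists_integer_valued_dual_gt:
  assumes \<phi>: "is_dual p0 \<phi>" and f: "f \<in> Ball0 p0" and "0 < \<delta>"
  shows "\<exists>g\<in>Ball0 p0. (\<forall>p. g p \<in> \<int>) \<and> \<phi> f - \<delta> < \<phi> g"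
proof (rule ccontr)
  assume none: "\<not> ?thesis"
  obtain C where "0 \<le> C" and C: "\<forall>h\<in>Lip0 p0. \<bar>\<phi> h\<bar> \<le> C * lipnorm h"
    using dual_bounded[OF \<phi>] by blast
  define n :: nat where "n = nat \<lceil>C / \<delta>\<rceil> + 1"
  have "0 < n"
    by (simp add: n_def)
  have "C / \<delta> < real n"
    unfolding n_def by linarith
  then have "C < real n * \<delta>"
    using \<open>0 < \<delta>\<close> by (simp add: divide_less_eq)
  have "\<phi> (\<lambda>p. of_int (lattice_round n k (f p))) \<le> \<phi> f - \<delta>" if "k < n" for k
    using none lattice_round_in_Ball0[OF f \<open>0 < n\<close> that] by force
  then have "(\<Sum>k<n. \<phi> (\<lambda>p. of_int (lattice_round n k (f p)))) \<le> real n * \<phi> f - real n * \<delta>"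
    using sum_mono[of "{..<n}" _ "\<lambda>_. \<phi> f - \<delta>"] by (simp add: right_diff_distrib)
  then show False
    using dual_sum_lattice_round_ge[OF \<phi> \<open>0 \<le> C\<close> C f \<open>0 < n\<close>] \<open>C < real n * \<delta>\<close> by linarith
qed

text \<open>Otherwise \<open>\<bar>g(x\<^sub>i) - g(y\<^sub>i)\<bar> = 2\<close> for all \<open>i\<close>, as \<open>g\<close> is integer-valued. Then \<open>x\<^sub>i\<close> and \<open>y\<^sub>i\<close> carry
  the two extreme values of \<open>g\<close> (its range has length at most 2) and the edges \<open>y\<^sub>i x\<^sub>i\<^sub>+\<^sub>1\<close> keep
  the extreme, so after three arms \<open>x\<^sub>1\<close> would carry the opposite extreme of itself.\<close>

lemma integer_valued_short_arm:
  assumes g: "g \<in> Ball0 p0" and int: "\<forall>p. g p \<in> \<int>"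
  shows "\<exists>i. \<bar>g (X i) - g (Y i)\<bar> \<le> 1"
proof (rule ccontr)
  assume no_short: "\<not> ?thesis"
  have long: "2 \<le> \<bar>g (X i) - g (Y i)\<bar>" for i
  proof -
    obtain m where m: "g (X i) - g (Y i) = of_int m"
      using int by (meson Ints_cases Ints_diff)
    have "\<not> \<bar>g (X i) - g (Y i)\<bar> \<le> 1"
      using no_short by blast
    then have "2 \<le> \<bar>m\<bar>"
      unfolding m by linarith
    then show ?thesis
      unfolding m by linarith
  qed
  have L: "\<bar>g p - g q\<bar> \<le> d p q" for p q
    using g by (simp add: mem_Ball0_iff)
  show False
    using long[of I1] long[of I2] long[of I3]
      L[of "X I2" "Y I1"] L[of "X I3" "Y I2"] L[of "X I1" "Y I3"]
      L[of "X I1" "Y I2"] L[of "X I2" "Y I3"] L[of "X I3" "Y I1"]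
      L[of "X I1" "Y I1"] L[of "X I2" "Y I2"] L[of "X I3" "Y I3"]
    by (simp add: d_X_Y abs_le_iff) linarith
qed

lemma exists_arm_midvalue:
  assumes g: "g \<in> Ball0 p0" and arm: "\<bar>g (X i) - g (Y i)\<bar> \<le> 1"
  shows "\<exists>a. \<bar>a - g (X i)\<bar> \<le> 1/2 \<and> \<bar>a - g (Y i)\<bar> \<le> 1/2 \<and> (\<forall>q. \<bar>a - g q\<bar> \<le> 3/2)"
proof -
  have L2: "\<bar>g p - g q\<bar> \<le> 2" for p q
    using g d_le_2[of p q] unfolding mem_Ball0_iff by (meson order_trans)
  define M where "M = Sup (range g)"
  have bdd: "bdd_above (range g)"
    using L2[of _ p0] g by (auto intro!: bdd_aboveI[of _ 2] simp: mem_Ball0_iff abs_le_iff)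
  have up: "g q \<le> M" for q
    unfolding M_def using bdd by (simp add: cSup_upper)
  have lo: "M \<le> g q + 2" for q
    unfolding M_def
  proof (rule cSup_least)
    fix x assume "x \<in> range g"
    then obtain p where "x = g p"
      by blast
    then show "x \<le> g q + 2"
      using L2[of p q] by arith
  qed simp
  define a where "a = max (max (g (X i)) (g (Y i)) - 1/2) (M - 3/2)"
  have "\<bar>a - g (X i)\<bar> \<le> 1/2" "\<bar>a - g (Y i)\<bar> \<le> 1/2"
    using arm up[of "X i"] up[of "Y i"] lo[of "X i"] lo[of "Y i"]
    unfolding a_def max_def abs_le_iff by auto
  moreover have "\<bar>a - g q\<bar> \<le> 3/2" for q
    using up[of q] lo[of q] L2[of "X i" q] L2[of "Y i" q]
    unfolding a_def max_def abs_le_iff by auto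
  ultimately show ?thesis
    by blast
qed

lemma fun_upd_arm_in_Ball0:
  assumes g: "g \<in> Ball0 p0"
    and aX: "\<bar>a - g (X i)\<bar> \<le> 1/2" and aY: "\<bar>a - g (Y i)\<bar> \<le> 1/2" and aq: "\<forall>q. \<bar>a - g q\<bar> \<le> 3/2"
    and s: "\<bar>s\<bar> \<le> 1/2" and p0: "p0 \<notin> {U i j, V i j}"
  shows "g(U i j := a + s, V i j := a - s) \<in> Ball0 p0"
proof -
  let ?G = "g(U i j := a + s, V i j := a - s)"
  have U_side: "\<bar>a + s - g q\<bar> \<le> d (U i j) q" if "q \<notin> {U i j, V i j}" for q
    using that aX aq[rule_format, of q] s unfolding abs_le_iff by (cases "q = X i") (auto simp: d_U)
  have V_side: "\<bar>a - s - g q\<bar> \<le> d (V i j) q" if "q \<notin> {U i j, V i j}" for q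
    using that aY aq[rule_format, of q] s unfolding abs_le_iff by (cases "q = Y i") (auto simp: d_V)
  have UV: "\<bar>(a + s) - (a - s)\<bar> \<le> d (U i j) (V i j)"
    using s by (simp add: d_U)
  have "\<bar>?G p - ?G q\<bar> \<le> d p q" for p q
  proof -
    have L: "\<bar>g p - g q\<bar> \<le> d p q"
      using g by (simp add: mem_Ball0_iff)
    consider "p \<notin> {U i j, V i j}" "q \<notin> {U i j, V i j}" | "p \<in> {U i j, V i j}" "q \<in> {U i j, V i j}"
      | "p \<in> {U i j, V i j}" "q \<notin> {U i j, V i j}" | "p \<notin> {U i j, V i j}" "q \<in> {U i j, V i j}"
      by blast
    then show ?thesis
    proof cases
      case 1
      then show ?thesis
        using L by simp
    next
      case 2
      then show ?thesis
        using UV by (auto simp: d_sym abs_minus_commute)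
    next
      case 3
      then show ?thesis
        using U_side[of q] V_side[of q] by auto
    next
      case 4
      then show ?thesis
        using U_side[of p] V_side[of p] by (auto simp: d_sym abs_minus_commute)
    qed
  qed
  moreover have "?G p0 = 0"
    using g p0 by (simp add: mem_Ball0_iff)
  ultimately show ?thesis
    by (simp add: mem_Ball0_iff)
qed

lemma sum_abs_dual_disjoint_bumps_le:
  assumes \<phi>: "is_dual p0 \<phi>" and "0 \<le> C" and C: "\<forall>h\<in>Lip0 p0. \<bar>\<phi> h\<bar> \<le> C * lipnorm h"
    and supp: "\<And>j p. p \<notin> S j \<Longrightarrow> k j p = 0" and disj: "disjoint_family S"
    and bnd: "\<And>j p. \<bar>k j p\<bar> \<le> B"
    and J: "finite J" "\<And>j. j \<in> J \<Longrightarrow> k j \<in> Lip0 p0"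
  shows "(\<Sum>j\<in>J. \<bar>\<phi> (k j)\<bar>) \<le> 2 * B * C"
proof -
  define w where "w j = (\<lambda>p. sgn (\<phi> (k j)) * k j p)" for j
  define H where "H p = (\<Sum>j\<in>J. w j p)" for p
  have wL: "w j \<in> Lip0 p0" if "j \<in> J" for j
    unfolding w_def using J(2)[OF that] by (rule Lip0_scale)
  have HL: "H \<in> Lip0 p0"
    unfolding H_def using J(1) wL by (rule Lip0_sum)
  have "\<phi> H = (\<Sum>j\<in>J. \<phi> (w j))"
    unfolding H_def using dual_sum[OF \<phi> J(1), of w] wL by blast
  also have "\<dots> = (\<Sum>j\<in>J. \<bar>\<phi> (k j)\<bar>)"
    using dual_scale[OF \<phi> J(2)] by (intro sum.cong) (auto simp: w_def sgn_if)
  finally have H_eq: "(\<Sum>j\<in>J. \<bar>\<phi> (k j)\<bar>) = \<phi> H" ..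
  have H_bound: "\<bar>H p\<bar> \<le> B" for p
  proof -
    have "\<exists>j'. \<forall>j. j \<noteq> j' \<longrightarrow> p \<notin> S j"
    proof (cases "\<exists>j'. p \<in> S j'")
      case True
      then show ?thesis
        using disj by (auto simp: disjoint_family_on_def)
    qed auto
    then obtain j' where j': "\<And>j. j \<noteq> j' \<Longrightarrow> p \<notin> S j"
      by blast
    have "H p = (\<Sum>j\<in>J. if j = j' then w j' p else 0)"
      unfolding H_def using supp j' by (intro sum.cong) (auto simp: w_def)
    also have "\<dots> = (if j' \<in> J then w j' p else 0)"
      using J(1) by simp
    finally show ?thesis
      using bnd[of j' p] by (auto simp: w_def abs_mult abs_sgn_eq)
  qed
  have "lipnorm H \<le> 2 * B"
  proof (rule lipnorm_le_oscillation)
    show "0 \<le> 2 * B"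
      using H_bound[of p0] by linarith
    show "\<bar>H p - H q\<bar> \<le> 2 * B" for p q
      using H_bound[of p] H_bound[of q] by arith
  qed
  have "\<phi> H \<le> C * lipnorm H"
    using C HL by (meson abs_ge_self order_trans)
  also have "\<dots> \<le> C * (2 * B)"
    using \<open>lipnorm H \<le> 2 * B\<close> \<open>0 \<le> C\<close> by (rule mult_left_mono)
  finally show ?thesis
    using H_eq by (simp add: ac_simps)
qed

lemma dual_tendsto_zero_on_disjoint_bumps:
  assumes \<phi>: "is_dual p0 \<phi>"
    and supp: "\<And>j p. p \<notin> S j \<Longrightarrow> k j p = 0" and disj: "disjoint_family S"
    and bnd: "\<And>j p. \<bar>k j p\<bar> \<le> B"
    and lip: "\<forall>\<^sub>F j in sequentially. k j \<in> Lip0 p0"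
  shows "(\<lambda>j. \<phi> (k j)) \<longlonglongrightarrow> 0"
proof -
  obtain C where "0 \<le> C" and C: "\<forall>h\<in>Lip0 p0. \<bar>\<phi> h\<bar> \<le> C * lipnorm h"
    using dual_bounded[OF \<phi>] by blast
  have "finite {j. k j \<in> Lip0 p0 \<and> \<eta> \<le> \<bar>\<phi> (k j)\<bar>}" if "0 < \<eta>" for \<eta>
  proof (rule ccontr)
    define N :: nat where "N = nat \<lceil>2 * B * C / \<eta>\<rceil> + 1"
    assume "infinite {j. k j \<in> Lip0 p0 \<and> \<eta> \<le> \<bar>\<phi> (k j)\<bar>}"
    then obtain J where J: "J \<subseteq> {j. k j \<in> Lip0 p0 \<and> \<eta> \<le> \<bar>\<phi> (k j)\<bar>}" "finite J" "card J = N"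
      by (meson infinite_arbitrarily_large)
    have "real N * \<eta> \<le> (\<Sum>j\<in>J. \<bar>\<phi> (k j)\<bar>)"
      using J sum_mono[of J "\<lambda>_. \<eta>" "\<lambda>j. \<bar>\<phi> (k j)\<bar>"] by auto
    also have "\<dots> \<le> 2 * B * C"
      using sum_abs_dual_disjoint_bumps_le[OF \<phi> \<open>0 \<le> C\<close> C, of S k B J] supp disj bnd J by blast
    finally have "real N * \<eta> \<le> 2 * B * C" .
    moreover have "2 * B * C / \<eta> < real N"
      unfolding N_def by linarith
    ultimately show False
      using \<open>0 < \<eta>\<close> by (simp add: divide_less_eq)
  qed
  moreover have "finite {j. k j \<notin> Lip0 p0}"
    using lip unfolding cofinite_eq_sequentially[symmetric] eventually_cofinite .
  ultimately have "finite {j. \<not> \<bar>\<phi> (k j)\<bar> < \<eta>}" if "0 < \<eta>" for \<eta>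
    using that by (auto intro: finite_subset[of _ "{j. k j \<notin> Lip0 p0} \<union> {j. k j \<in> Lip0 p0 \<and> \<eta> \<le> \<bar>\<phi> (k j)\<bar>}"])
  then show ?thesis
    unfolding tendsto_iff dist_real_def cofinite_eq_sequentially[symmetric] eventually_cofinite
    by simp
qed

lemma eventually_fun_upd_arm_in_slice:
  assumes \<phi>: "is_dual p0 \<phi>" and g: "g \<in> Ball0 p0" and "c < \<phi> g"
    and aX: "\<bar>a - g (X i)\<bar> \<le> 1/2" and aY: "\<bar>a - g (Y i)\<bar> \<le> 1/2" and aq: "\<forall>q. \<bar>a - g q\<bar> \<le> 3/2"
    and s: "\<bar>s\<bar> \<le> 1/2"
  shows "\<forall>\<^sub>F j in sequentially. g(U i j := a + s, V i j := a - s) \<in> {f \<in> Ball0 p0. c < \<phi> f}"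
proof -
  define G where "G j = g(U i j := a + s, V i j := a - s)" for j
  have ball: "\<forall>\<^sub>F j in sequentially. G j \<in> Ball0 p0"
    using eventually_not_on_arm[of p0 i]
    by eventually_elim (use fun_upd_arm_in_Ball0[OF g aX aY aq s] in \<open>simp add: G_def\<close>)
  have bump: "\<forall>\<^sub>F j in sequentially. (\<lambda>p. G j p - g p) \<in> Lip0 p0"
    using ball by eventually_elim (use g Ball0_subset_Lip0 Lip0_diff in blast)
  have "(\<lambda>j. \<phi> (\<lambda>p. G j p - g p)) \<longlonglongrightarrow> 0"
  proof (rule dual_tendsto_zero_on_disjoint_bumps[OF \<phi> _ _ _ bump])
    show "\<And>j p. p \<notin> {U i j, V i j} \<Longrightarrow> G j p - g p = 0"
      by (simp add: G_def)
    show "disjoint_family (\<lambda>j. {U i j, V i j})"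
      by (auto simp: disjoint_family_on_def)
    have "\<bar>a + s - g q\<bar> \<le> 2" for q
      using aq[rule_format, of q] s by arith
    moreover have "\<bar>a - s - g q\<bar> \<le> 2" for q
      using aq[rule_format, of q] s by arith
    ultimately show "\<And>j p. \<bar>G j p - g p\<bar> \<le> 2"
      by (simp add: G_def)
  qed
  then have "\<forall>\<^sub>F j in sequentially. \<phi> (\<lambda>p. G j p - g p) > c - \<phi> g"
    using \<open>c < \<phi> g\<close> by (intro order_tendstoD) auto
  with ball bump have "\<forall>\<^sub>F j in sequentially. G j \<in> {f \<in> Ball0 p0. c < \<phi> f}"
    by eventually_elim (use dual_diff[OF \<phi> _ Ball0_subset_Lip0[THEN subsetD, OF g]]
        Ball0_subset_Lip0 in fastforce)
  then show ?thesis
    by (simp add: G_def)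
qed

lemma diam0_slice_eq_2:
  assumes \<phi>: "is_dual p0 \<phi>" and g: "g \<in> Ball0 p0"
    and arm: "\<bar>g (X i) - g (Y i)\<bar> \<le> 1" and "c < \<phi> g"
  shows "diam0 {f \<in> Ball0 p0. c < \<phi> f} = 2"
proof -
  obtain a where aX: "\<bar>a - g (X i)\<bar> \<le> 1/2" and aY: "\<bar>a - g (Y i)\<bar> \<le> 1/2"
    and aq: "\<forall>q. \<bar>a - g q\<bar> \<le> 3/2"
    using exists_arm_midvalue[OF g arm] by blast
  let ?G = "\<lambda>s j. g(U i j := a + s, V i j := a - s)"
  have in_slice: "\<forall>\<^sub>F j in sequentially. ?G s j \<in> {f \<in> Ball0 p0. c < \<phi> f}" if "\<bar>s\<bar> \<le> 1/2" for s
    using eventually_fun_upd_arm_in_slice[OF \<phi> g \<open>c < \<phi> g\<close> aX aY aq that] .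
  have "\<forall>\<^sub>F j in sequentially.
      ?G (1/2) j \<in> {f \<in> Ball0 p0. c < \<phi> f} \<and> ?G (-1/2) j \<in> {f \<in> Ball0 p0. c < \<phi> f}"
    by (intro eventually_conj in_slice) simp_all
  then obtain j where plus: "?G (1/2) j \<in> {f \<in> Ball0 p0. c < \<phi> f}"
    and minus: "?G (-1/2) j \<in> {f \<in> Ball0 p0. c < \<phi> f}"
    using eventually_happens'[OF sequentially_bot] by blast
  show ?thesis
    by (rule diam0_eq_2[OF _ plus minus, of p0 "U i j" "V i j"]) (auto simp: d_U)
qed

lemma LD2P_holds: "LD2P p0"
  unfolding LD2P_def
proof (intro allI impI, elim conjE)
  fix \<phi> and \<alpha> :: real
  assume \<phi>: "is_dual p0 \<phi>" and "dualnorm p0 \<phi> = 1" and "0 < \<alpha>"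
  then obtain f where "f \<in> Ball0 p0" and "1 - \<alpha> < \<phi> f"
    using exists_Ball0_dual_gt by blast
  then obtain g where g: "g \<in> Ball0 p0" "\<forall>p. g p \<in> \<int>" and "1 - \<alpha> < \<phi> g"
    using exists_integer_valued_dual_gt[OF \<phi>, of f "\<phi> f - (1 - \<alpha>)"] by auto
  obtain i where "\<bar>g (X i) - g (Y i)\<bar> \<le> 1"
    using integer_valued_short_arm[OF g] by blast
  then show "diam0 {f \<in> Ball0 p0. 1 - \<alpha> < \<phi> f} = 2"
    using diam0_slice_eq_2[OF \<phi> g(1)] \<open>1 - \<alpha> < \<phi> g\<close> by blast
qed

theorem mainTheorem17:
  fixes p0 :: pt
  shows "LD2P p0 \<and> \<not> wstar_D2P p0 \<and> \<not> D2P p0"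
proof -
  have evals_Free: "(\<lambda>q f. f q) ` nodes \<subseteq> Free p0"
    using eval_in_Free by blast
  then have evals_dual: "(\<lambda>q f. f q) ` nodes \<subseteq> {\<phi>. is_dual p0 \<phi>}"
    by (auto simp: Free_def)
  obtain W where "rel_open_in_ball p0 (Free p0) W" "W \<noteq> {}" "diam0 W < 2"
    using exists_rel_open_diam0_lt_2[OF evals_Free] by blast
  then have "\<not> wstar_D2P p0"
    unfolding wstar_D2P_def by auto
  moreover obtain W' where "rel_open_in_ball p0 {\<phi>. is_dual p0 \<phi>} W'" "W' \<noteq> {}" "diam0 W' < 2"
    using exists_rel_open_diam0_lt_2[OF evals_dual] by blast
  then have "\<not> D2P p0"
    unfolding D2P_def by auto
  ultimately show ?thesis
    using LD2P_holds by blast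
qed

end
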